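(* Let $\boldsymbol\xi_i=(\xi_i^1,\dots,\xi_i^k)\in\mathbb{R}^k$, $i\in\mathbb{Z}$, be independent, identically distributed vectors of (possibly dependent) non-negative random variables, and let $f$ be a directionally convex function on $\mathbb{R}^k$. Define $g$ on $\mathbb{Z}$ by $g(n)=\mathbb{E}f\big(\mathrm{sgn}(n)\sum_{i=1}^{|n|}\boldsymbol\xi_i\big)$ for $n\ne0$ and $g(0)=f(0,\dots,0)$. Then $g$ is convex on $\mathbb{Z}$, i.e. $g(n-1)+g(n+1)-2g(n)\ge0$ for all $n\in\mathbb{Z}$ (whenever the expectations are finite).
   Context: A measurable $f:\mathbb{R}^k\to\mathbb{R}$ is directionally convex if $\Delta^i_\epsilon\Delta^j_\delta f(x)\ge0$ for all $x\in\mathbb{R}^k$, $\epsilon,\delta>0$, $i,j\in\{1,\dots,k\}$, where $\Delta^i_\epsilon f(x)=f(x+\epsilon e_i)-f(x)$ and $e_i$ are the canonical basis vectors. $\mathrm{sgn}(n)=n/|n|$ for $n\ne0$. *)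

theory Defs
  imports "HOL-Probability.Probability"
begin

definition dir_convex :: "(real ^ 'k \<Rightarrow> real) \<Rightarrow> bool" where
  "dir_convex f \<longleftrightarrow> f \<in> borel_measurable borel \<and>
     (\<forall>x \<epsilon> \<delta> i j. \<epsilon> > 0 \<longrightarrow> \<delta> > 0 \<longrightarrow>
        f (x + \<epsilon> *\<^sub>R axis i 1 + \<delta> *\<^sub>R axis j 1) - f (x + \<delta> *\<^sub>R axis j 1)
        - f (x + \<epsilon> *\<^sub>R axis i 1) + f x \<ge> 0)"

definition signed_sum :: "(int \<Rightarrow> 'a \<Rightarrow> real ^ 'k) \<Rightarrow> int \<Rightarrow> 'a \<Rightarrow> real ^ 'k" where
  "signed_sum \<xi> n \<omega> = of_int (sgn n) *\<^sub>R (\<Sum>i\<in>{1..\<bar>n\<bar>}. \<xi> i \<omega>)"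

definition gfun :: "'a measure \<Rightarrow> (int \<Rightarrow> 'a \<Rightarrow> real ^ 'k) \<Rightarrow> (real ^ 'k \<Rightarrow> real) \<Rightarrow> int \<Rightarrow> real" where
  "gfun M \<xi> f n = (if n = 0 then f 0 else integral\<^sup>L M (\<lambda>\<omega>. f (signed_sum \<xi> n \<omega>)))"

end

theory Submission
  imports Defs
begin

text \<open>Write S(m) = \<xi>(1) + ... + \<xi>(m). For n > 0 the pairs (S(n-1), \<xi>(n)) and (S(n-1), \<xi>(n+1))
  have the same joint law by independence, so the second difference of g at n equals
  E [f(S + \<xi>(n) + \<xi>(n+1)) - f(S + \<xi>(n)) - f(S + \<xi>(n+1)) + f(S)] with S = S(n-1): the expectation
  of a mixed second difference of f with non-negative increments, which directional convexity
  makes non-negative one coordinate step at a time. At n = 0 the same works with S = -\<xi>(1),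
  and n < 0 reduces to n > 0 for x \<mapsto> f(-x), which is again directionally convex.\<close>

definition mixed_diff :: "('a::ab_group_add \<Rightarrow> real) \<Rightarrow> 'a \<Rightarrow> 'a \<Rightarrow> 'a \<Rightarrow> real" where
  "mixed_diff f x a b = f (x + a + b) - f (x + a) - f (x + b) + f x"

lemma mixed_diff_add_left: "mixed_diff f x (a1 + a2) b = mixed_diff f x a1 b + mixed_diff f (x + a1) a2 b"
  unfolding mixed_diff_def by (simp add: algebra_simps)

lemma mixed_diff_add_right: "mixed_diff f x a (b1 + b2) = mixed_diff f x a b1 + mixed_diff f (x + b1) a b2"
  unfolding mixed_diff_def by (simp add: algebra_simps)

lemma mixed_diff_sum_left_nonneg:
  assumes "finite S" "\<And>x i. i \<in> S \<Longrightarrow> mixed_diff f x (a i) b \<ge> 0"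
  shows "mixed_diff f x (\<Sum>i\<in>S. a i) b \<ge> 0"
  using assms
proof (induction S arbitrary: x rule: finite_induct)
  case empty then show ?case by (simp add: mixed_diff_def)
next
  case (insert i S)
  then show ?case by (simp add: mixed_diff_add_left)
qed

lemma mixed_diff_sum_right_nonneg:
  assumes "finite S" "\<And>x j. j \<in> S \<Longrightarrow> mixed_diff f x a (b j) \<ge> 0"
  shows "mixed_diff f x a (\<Sum>j\<in>S. b j) \<ge> 0"
  using assms
proof (induction S arbitrary: x rule: finite_induct)
  case empty then show ?case by (simp add: mixed_diff_def)
next
  case (insert j S)
  then show ?case by (simp add: mixed_diff_add_right)
qed

lemma dir_convex_mixed_diff_axis_nonneg:
  assumes "dir_convex f" "e \<ge> 0" "d \<ge> 0"
  shows "mixed_diff f x (e *\<^sub>R axis i 1) (d *\<^sub>R axis j 1) \<ge> 0"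
proof (cases "e = 0 \<or> d = 0")
  case True then show ?thesis by (auto simp: mixed_diff_def)
next
  case False
  with assms have "e > 0" "d > 0" by auto
  with assms(1) have "f (x + e *\<^sub>R axis i 1 + d *\<^sub>R axis j 1) - f (x + d *\<^sub>R axis j 1)
      - f (x + e *\<^sub>R axis i 1) + f x \<ge> 0"
    unfolding dir_convex_def by blast
  then show ?thesis unfolding mixed_diff_def by linarith
qed

lemma dir_convex_mixed_diff_nonneg:
  fixes f :: "real ^ 'k \<Rightarrow> real"
  assumes "dir_convex f" "\<And>i. a $ i \<ge> 0" "\<And>i. b $ i \<ge> 0"
  shows "mixed_diff f x a b \<ge> 0"
proof -
  have expand: "v = (\<Sum>i\<in>UNIV. (v $ i) *\<^sub>R axis i 1)" for v :: "real ^ 'k"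
    using basis_expansion[of v] by (simp add: scalar_mult_eq_scaleR)
  have "mixed_diff f x (\<Sum>i\<in>UNIV. (a $ i) *\<^sub>R axis i 1) (\<Sum>j\<in>UNIV. (b $ j) *\<^sub>R axis j 1) \<ge> 0"
    using assms
    by (intro mixed_diff_sum_left_nonneg mixed_diff_sum_right_nonneg dir_convex_mixed_diff_axis_nonneg) auto
  then show ?thesis using expand[of a] expand[of b] by simp
qed

lemma dir_convex_reflect:
  fixes f :: "real ^ 'k \<Rightarrow> real"
  assumes "dir_convex f" shows "dir_convex (\<lambda>x. f (- x))"
proof -
  have "(\<lambda>x. f (- x)) \<in> borel_measurable borel"
    using assms unfolding dir_convex_def
    by (intro measurable_compose[OF borel_measurable_continuous_onI[OF continuous_on_minus[OF continuous_on_id]]]) simp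
  moreover have "f (- (x + e *\<^sub>R axis i 1 + d *\<^sub>R axis j 1)) - f (- (x + d *\<^sub>R axis j 1))
      - f (- (x + e *\<^sub>R axis i 1)) + f (- x) \<ge> 0" if "e > 0" "d > 0" for x e d i j
  proof -
    let ?y = "- x - e *\<^sub>R axis i 1 - d *\<^sub>R axis j 1"
    have "f (?y + e *\<^sub>R axis i 1 + d *\<^sub>R axis j 1) - f (?y + d *\<^sub>R axis j 1)
        - f (?y + e *\<^sub>R axis i 1) + f ?y \<ge> 0"
      using assms that unfolding dir_convex_def by blast
    then show ?thesis by (simp add: algebra_simps)
  qed
  ultimately show ?thesis unfolding dir_convex_def by blast
qed

lemma integral_mixed_diff_nonneg_same_distr:
  fixes T a b :: "'a \<Rightarrow> 'b::euclidean_space" and f :: "'b \<Rightarrow> real"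
  assumes [measurable]: "T \<in> borel_measurable M" "a \<in> borel_measurable M" "b \<in> borel_measurable M"
      "f \<in> borel_measurable borel"
    and same_distr: "distr M (borel \<Otimes>\<^sub>M borel) (\<lambda>\<omega>. (T \<omega>, a \<omega>))
                   = distr M (borel \<Otimes>\<^sub>M borel) (\<lambda>\<omega>. (T \<omega>, b \<omega>))"
    and mixed_diff_nonneg: "AE \<omega> in M. mixed_diff f (T \<omega>) (a \<omega>) (b \<omega>) \<ge> 0"
    and int_T: "integrable M (\<lambda>\<omega>. f (T \<omega>))"
    and int_Ta: "integrable M (\<lambda>\<omega>. f (T \<omega> + a \<omega>))"
    and int_Tab: "integrable M (\<lambda>\<omega>. f (T \<omega> + a \<omega> + b \<omega>))"
  shows "(\<integral>\<omega>. f (T \<omega>) \<partial>M) + (\<integral>\<omega>. f (T \<omega> + a \<omega> + b \<omega>) \<partial>M) - 2 * (\<integral>\<omega>. f (T \<omega> + a \<omega>) \<partial>M) \<ge> 0"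
proof -
  have f_add [measurable]: "(\<lambda>p. f (fst p + snd p)) \<in> borel_measurable (borel \<Otimes>\<^sub>M borel)"
    by measurable
  have pair_a: "(\<lambda>\<omega>. (T \<omega>, a \<omega>)) \<in> M \<rightarrow>\<^sub>M borel \<Otimes>\<^sub>M borel"
    and pair_b: "(\<lambda>\<omega>. (T \<omega>, b \<omega>)) \<in> M \<rightarrow>\<^sub>M borel \<Otimes>\<^sub>M borel"
    by measurable
  have int_Tb: "integrable M (\<lambda>\<omega>. f (T \<omega> + b \<omega>))"
    using int_Ta integrable_distr_eq[OF pair_a f_add] integrable_distr_eq[OF pair_b f_add] same_distr
    by simp
  have swap: "(\<integral>\<omega>. f (T \<omega> + b \<omega>) \<partial>M) = (\<integral>\<omega>. f (T \<omega> + a \<omega>) \<partial>M)"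
    using integral_distr[OF pair_a f_add] integral_distr[OF pair_b f_add] same_distr by simp
  have "0 \<le> (\<integral>\<omega>. mixed_diff f (T \<omega>) (a \<omega>) (b \<omega>) \<partial>M)"
    using mixed_diff_nonneg by (rule integral_nonneg_AE)
  also have "\<dots> = (\<integral>\<omega>. f (T \<omega> + a \<omega> + b \<omega>) \<partial>M) - (\<integral>\<omega>. f (T \<omega> + a \<omega>) \<partial>M)
      - (\<integral>\<omega>. f (T \<omega> + b \<omega>) \<partial>M) + (\<integral>\<omega>. f (T \<omega>) \<partial>M)"
    unfolding mixed_diff_def using int_T int_Ta int_Tb int_Tab by simp
  finally show ?thesis using swap by simp
qed

lemma (in prob_space) indep_var_sum_other:
  fixes X :: "'i \<Rightarrow> 'a \<Rightarrow> 'b::euclidean_space"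
  assumes indep: "indep_vars (\<lambda>_. borel) X UNIV" and "finite I" "i \<notin> I"
  shows "indep_var borel (\<lambda>\<omega>. \<Sum>j\<in>I. X j \<omega>) borel (X i)"
proof -
  have "indep_var
    borel ((\<lambda>g. \<Sum>j\<in>I. g j) \<circ> (\<lambda>\<omega>. restrict (\<lambda>j. X j \<omega>) I))
    borel ((\<lambda>g. g i) \<circ> (\<lambda>\<omega>. restrict (\<lambda>j. X j \<omega>) {i}))"
    using assms by (intro indep_var_compose[OF indep_var_restrict[OF indep]]) auto
  also have "(\<lambda>g. g i) \<circ> (\<lambda>\<omega>. restrict (\<lambda>j. X j \<omega>) {i}) = X i"
    by auto
  also have "(\<lambda>g. \<Sum>j\<in>I. g j) \<circ> (\<lambda>\<omega>. restrict (\<lambda>j. X j \<omega>) I) = (\<lambda>\<omega>. \<Sum>j\<in>I. X j \<omega>)"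
    by (auto cong: rev_conj_cong)
  finally show ?thesis .
qed

lemma (in prob_space) distr_sum_pair_eq:
  fixes X :: "'i \<Rightarrow> 'a \<Rightarrow> 'b::euclidean_space"
  assumes indep: "indep_vars (\<lambda>_. borel) X UNIV" and I: "finite I" "i \<notin> I" "j \<notin> I"
    and same_distr: "distr M borel (X i) = distr M borel (X j)"
  shows "distr M (borel \<Otimes>\<^sub>M borel) (\<lambda>\<omega>. (\<Sum>l\<in>I. X l \<omega>, X i \<omega>))
       = distr M (borel \<Otimes>\<^sub>M borel) (\<lambda>\<omega>. (\<Sum>l\<in>I. X l \<omega>, X j \<omega>))"
proof -
  have "indep_var borel (\<lambda>\<omega>. \<Sum>l\<in>I. X l \<omega>) borel (X i)"
    and "indep_var borel (\<lambda>\<omega>. \<Sum>l\<in>I. X l \<omega>) borel (X j)"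
    using I by (auto intro: indep_var_sum_other[OF indep])
  then show ?thesis
    using same_distr unfolding indep_var_distribution_eq by metis
qed

lemma signed_sum_nonneg_eq: "n \<ge> 0 \<Longrightarrow> signed_sum \<xi> n \<omega> = (\<Sum>i\<in>{1..n}. \<xi> i \<omega>)"
  by (cases "n = 0") (simp_all add: signed_sum_def)

lemma signed_sum_succ: "n \<ge> 0 \<Longrightarrow> signed_sum \<xi> (n + 1) \<omega> = signed_sum \<xi> n \<omega> + \<xi> (n + 1) \<omega>"
proof -
  assume "n \<ge> 0"
  then have "{1..n + 1} = insert (n + 1) {1..n}" by auto
  with \<open>n \<ge> 0\<close> show ?thesis by (simp add: signed_sum_nonneg_eq add.commute)
qed

lemma signed_sum_uminus: "signed_sum \<xi> (- n) \<omega> = - signed_sum \<xi> n \<omega>"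
  by (simp add: signed_sum_def sgn_minus)

lemma signed_sum_measurable [measurable]:
  "(\<And>i. \<xi> i \<in> borel_measurable M) \<Longrightarrow> signed_sum \<xi> n \<in> borel_measurable M"
  unfolding signed_sum_def by measurable

lemma gfun_eq_integral: "prob_space M \<Longrightarrow> gfun M \<xi> f n = (\<integral>\<omega>. f (signed_sum \<xi> n \<omega>) \<partial>M)"
  by (simp add: gfun_def signed_sum_def prob_space.prob_space)

lemma gfun_reflect: "gfun M \<xi> (\<lambda>x. f (- x)) n = gfun M \<xi> f (- n)"
  by (simp add: gfun_def signed_sum_uminus)

lemma gfun_second_difference_nonneg_pos:
  fixes \<xi> :: "int \<Rightarrow> 'a \<Rightarrow> real ^ 'k" and f :: "real ^ 'k \<Rightarrow> real"
  assumes "prob_space M"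
    and meas: "\<And>i. \<xi> i \<in> borel_measurable M"
    and indep: "prob_space.indep_vars M (\<lambda>_. borel) \<xi> UNIV"
    and ident: "\<And>i j. distr M borel (\<xi> i) = distr M borel (\<xi> j)"
    and nonneg: "\<And>i \<omega> c. \<omega> \<in> space M \<Longrightarrow> \<xi> i \<omega> $ c \<ge> 0"
    and dc: "dir_convex f"
    and finite_exp: "\<And>m. m \<in> {n - 1, n, n + 1} \<Longrightarrow> m \<noteq> 0 \<Longrightarrow>
                       integrable M (\<lambda>\<omega>. f (signed_sum \<xi> m \<omega>))"
    and "n > 0"
  shows "gfun M \<xi> f (n - 1) + gfun M \<xi> f (n + 1) - 2 * gfun M \<xi> f n \<ge> 0"
proof -
  interpret prob_space M by fact
  define T where "T = signed_sum \<xi> (n - 1)"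
  have T_a: "signed_sum \<xi> n \<omega> = T \<omega> + \<xi> n \<omega>" for \<omega>
    using signed_sum_succ[of "n - 1" \<xi> \<omega>] \<open>n > 0\<close> by (simp add: T_def)
  have T_a_b: "signed_sum \<xi> (n + 1) \<omega> = T \<omega> + \<xi> n \<omega> + \<xi> (n + 1) \<omega>" for \<omega>
    using signed_sum_succ[of n \<xi> \<omega>] T_a \<open>n > 0\<close> by simp
  have integrable: "integrable M (\<lambda>\<omega>. f (signed_sum \<xi> m \<omega>))" if "m \<in> {n - 1, n, n + 1}" for m
    using finite_exp[OF that] by (cases "m = 0") (simp_all add: signed_sum_def)
  have "distr M (borel \<Otimes>\<^sub>M borel) (\<lambda>\<omega>. (\<Sum>l\<in>{1..n - 1}. \<xi> l \<omega>, \<xi> n \<omega>))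
      = distr M (borel \<Otimes>\<^sub>M borel) (\<lambda>\<omega>. (\<Sum>l\<in>{1..n - 1}. \<xi> l \<omega>, \<xi> (n + 1) \<omega>))"
    using indep ident by (intro distr_sum_pair_eq) auto
  then have same_distr: "distr M (borel \<Otimes>\<^sub>M borel) (\<lambda>\<omega>. (T \<omega>, \<xi> n \<omega>))
      = distr M (borel \<Otimes>\<^sub>M borel) (\<lambda>\<omega>. (T \<omega>, \<xi> (n + 1) \<omega>))"
    using \<open>n > 0\<close> by (simp add: T_def signed_sum_nonneg_eq)
  have "T \<in> borel_measurable M" "f \<in> borel_measurable borel"
    using meas dc unfolding T_def dir_convex_def by (simp_all add: signed_sum_measurable)
  moreover have "integrable M (\<lambda>\<omega>. f (T \<omega>))"
    and "integrable M (\<lambda>\<omega>. f (T \<omega> + \<xi> n \<omega>))"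
    and "integrable M (\<lambda>\<omega>. f (T \<omega> + \<xi> n \<omega> + \<xi> (n + 1) \<omega>))"
    using integrable[of "n - 1"] integrable[of n] integrable[of "n + 1"]
    by (simp_all add: T_def[symmetric] T_a T_a_b)
  ultimately have "(\<integral>\<omega>. f (T \<omega>) \<partial>M) + (\<integral>\<omega>. f (T \<omega> + \<xi> n \<omega> + \<xi> (n + 1) \<omega>) \<partial>M)
      - 2 * (\<integral>\<omega>. f (T \<omega> + \<xi> n \<omega>) \<partial>M) \<ge> 0"
    using meas same_distr dc nonneg
    by (intro integral_mixed_diff_nonneg_same_distr AE_I2 dir_convex_mixed_diff_nonneg) auto
  then show ?thesis
    using T_a T_a_b by (simp add: gfun_eq_integral[OF \<open>prob_space M\<close>] T_def)
qed

lemma gfun_second_difference_nonneg_zero: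
  fixes \<xi> :: "int \<Rightarrow> 'a \<Rightarrow> real ^ 'k" and f :: "real ^ 'k \<Rightarrow> real"
  assumes "prob_space M"
    and meas: "\<xi> 1 \<in> borel_measurable M"
    and nonneg: "\<And>\<omega> c. \<omega> \<in> space M \<Longrightarrow> \<xi> 1 \<omega> $ c \<ge> 0"
    and dc: "dir_convex f"
    and int_pos: "integrable M (\<lambda>\<omega>. f (\<xi> 1 \<omega>))"
    and int_neg: "integrable M (\<lambda>\<omega>. f (- \<xi> 1 \<omega>))"
  shows "gfun M \<xi> f (- 1) + gfun M \<xi> f 1 - 2 * gfun M \<xi> f 0 \<ge> 0"
proof -
  interpret prob_space M by fact
  have "(\<integral>\<omega>. f (- \<xi> 1 \<omega>) \<partial>M) + (\<integral>\<omega>. f (- \<xi> 1 \<omega> + \<xi> 1 \<omega> + \<xi> 1 \<omega>) \<partial>M)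
      - 2 * (\<integral>\<omega>. f (- \<xi> 1 \<omega> + \<xi> 1 \<omega>) \<partial>M) \<ge> 0"
    using meas dc nonneg int_pos int_neg
    by (intro integral_mixed_diff_nonneg_same_distr AE_I2 dir_convex_mixed_diff_nonneg)
       (auto simp: dir_convex_def)
  then show ?thesis
    by (simp add: gfun_def signed_sum_def prob_space)
qed

theorem lemmaA1:
  fixes M :: "'a measure" and \<xi> :: "int \<Rightarrow> 'a \<Rightarrow> real ^ 'k"
    and f :: "real ^ 'k \<Rightarrow> real" and n :: int
  assumes "prob_space M"
    and meas: "\<And>i. \<xi> i \<in> borel_measurable M"
    and indep: "prob_space.indep_vars M (\<lambda>_. borel) \<xi> UNIV"
    and ident: "\<And>i j. distr M borel (\<xi> i) = distr M borel (\<xi> j)"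
    and nonneg: "\<And>i \<omega> c. \<omega> \<in> space M \<Longrightarrow> \<xi> i \<omega> $ c \<ge> 0"
    and dc: "dir_convex f"
    and finite_exp: "\<And>m. m \<in> {n - 1, n, n + 1} \<Longrightarrow> m \<noteq> 0 \<Longrightarrow>
                       integrable M (\<lambda>\<omega>. f (signed_sum \<xi> m \<omega>))"
  shows "gfun M \<xi> f (n - 1) + gfun M \<xi> f (n + 1) - 2 * gfun M \<xi> f n \<ge> 0"
proof (cases n "0::int" rule: linorder_cases)
  case less
  then have "- n > 0" by simp
  have "gfun M \<xi> (\<lambda>x. f (- x)) (- n - 1) + gfun M \<xi> (\<lambda>x. f (- x)) (- n + 1)
      - 2 * gfun M \<xi> (\<lambda>x. f (- x)) (- n) \<ge> 0"
  proof (rule gfun_second_difference_nonneg_pos[OF assms(1-5) dir_convex_reflect[OF dc] _ \<open>- n > 0\<close>])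
    fix m assume "m \<in> {- n - 1, - n, - n + 1}" "m \<noteq> 0"
    then show "integrable M (\<lambda>\<omega>. f (- signed_sum \<xi> m \<omega>))"
      using finite_exp[of "- m"] by (auto simp: signed_sum_uminus[symmetric])
  qed
  then show ?thesis by (simp add: gfun_reflect add.commute)
next
  case equal
  then show ?thesis
    using gfun_second_difference_nonneg_zero[OF assms(1) meas nonneg dc] finite_exp[of 1] finite_exp[of "- 1"]
    by (simp add: signed_sum_def)
next
  case greater
  show ?thesis
    using gfun_second_difference_nonneg_pos[OF assms greater] .
qed

end
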